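(* Let $\mathcal{F}$ be a linear $k$-uniform family with $k\geq 2$ and let $\mathcal{M}$ be a maximum matching of $\mathcal{F}$. If $B=\{x_1,x_2,\ldots,x_k\}\in\mathcal{M}$ is such that $d_1(x_i,\mathcal{M})\geq k$ for some $1\leq i\leq k$, then $d_1(x_j,\mathcal{M})=0$ for all $1\leq j\leq k$ with $j\neq i$.
   Context: A family is a finite collection of distinct subsets of a vertex set; it is $k$-uniform if every member has exactly $k$ elements and linear if any two distinct members share at most one vertex. A matching is a collection of pairwise disjoint members; it is maximum if it has the largest possible size. $X_{\mathcal{M}}=\bigcup_{A\in\mathcal{M}}A$. For $i\in\{1,\ldots,k\}$, $D_i(\mathcal{F},\mathcal{M})=\{A\in\mathcal{F}: |A\cap X_{\mathcal{M}}|=i\}$, and for a vertex $x$, $d_i(x,\mathcal{M})=|\{A\in D_i(\mathcal{F},\mathcal{M}): x\in A\}|$. *)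

theory Defs
  imports Main
begin

definition uniform_family :: "nat \<Rightarrow> 'a set set \<Rightarrow> bool" where
  "uniform_family k F \<longleftrightarrow> finite F \<and> (\<forall>A\<in>F. finite A \<and> card A = k)"

definition linear_family :: "'a set set \<Rightarrow> bool" where
  "linear_family F \<longleftrightarrow> (\<forall>A\<in>F. \<forall>B\<in>F. A \<noteq> B \<longrightarrow> card (A \<inter> B) \<le> 1)"

definition is_matching :: "'a set set \<Rightarrow> 'a set set \<Rightarrow> bool" where
  "is_matching F M \<longleftrightarrow> M \<subseteq> F \<and> (\<forall>A\<in>M. \<forall>B\<in>M. A \<noteq> B \<longrightarrow> A \<inter> B = {})"

definition is_max_matching :: "'a set set \<Rightarrow> 'a set set \<Rightarrow> bool" where
  "is_max_matching F M \<longleftrightarrow> is_matching F M \<and>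
     (\<forall>M'. is_matching F M' \<longrightarrow> card M' \<le> card M)"

definition XM :: "'a set set \<Rightarrow> 'a set" where
  "XM M = \<Union>M"

definition D_i :: "nat \<Rightarrow> 'a set set \<Rightarrow> 'a set set \<Rightarrow> 'a set set" where
  "D_i i F M = {A\<in>F. card (A \<inter> XM M) = i}"

definition d_i :: "nat \<Rightarrow> 'a set set \<Rightarrow> 'a \<Rightarrow> 'a set set \<Rightarrow> nat" where
  "d_i i F x M = card {A\<in>D_i i F M. x \<in> A}"

end

theory Submission
  imports Defs
begin

text \<open>Suppose some other vertex y of B lies in a member A' of D_1. The members of D_1 through x
pairwise meet only in x, and each of them meets A' in a vertex outside the matched vertex set;
A' has only k - 1 such vertices, so among the at least k members through x one, A, is disjoint
from A'. Replacing B by A and A' then enlarges the matching.\<close>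

lemma linear_family_star_meeting_card_le:
  assumes "linear_family F" "S \<subseteq> F" "\<And>A. A \<in> S \<Longrightarrow> finite A \<and> x \<in> A"
    and "finite C" "x \<notin> C" "\<And>A. A \<in> S \<Longrightarrow> A \<inter> C \<noteq> {}"
  shows "card S \<le> card C"
proof -
  define f where "f A = (SOME v. v \<in> A \<inter> C)" for A
  have f_mem: "f A \<in> A \<inter> C" if "A \<in> S" for A
    unfolding f_def using assms(6)[OF that] by (metis all_not_in_conv someI)
  have "inj_on f S"
  proof (rule inj_onI, rule ccontr)
    fix A1 A2 assume A12: "A1 \<in> S" "A2 \<in> S" "f A1 = f A2" "A1 \<noteq> A2"
    have "{x, f A1} \<subseteq> A1 \<inter> A2" "x \<noteq> f A1"
      using f_mem[OF A12(1)] f_mem[OF A12(2)] A12(3) assms(3)[OF A12(1)] assms(3)[OF A12(2)]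
        assms(5) by auto
    then have "2 \<le> card (A1 \<inter> A2)"
      using card_mono[of "A1 \<inter> A2" "{x, f A1}"] assms(3)[OF A12(1)] by simp
    moreover have "card (A1 \<inter> A2) \<le> 1"
      using assms(1,2) A12 unfolding linear_family_def by blast
    ultimately show False by simp
  qed
  then show ?thesis
    using f_mem assms(4) by (intro card_inj_on_le) auto
qed

lemma D_i_1_trace:
  assumes "A \<in> D_i 1 F M" "x \<in> A" "x \<in> XM M"
  shows "A \<inter> XM M = {x}"
proof -
  have "card (A \<inter> XM M) = 1" using assms(1) unfolding D_i_def by simp
  then show ?thesis using assms(2,3) by (metis IntI card_1_singletonE singletonD)
qed

lemma D_i_disjoint_matching:
  assumes "uniform_family k F" "is_matching F M" "A \<in> D_i i F M" "i \<noteq> k"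
  shows "A \<notin> M"
proof
  assume "A \<in> M"
  then have "A \<inter> XM M = A" unfolding XM_def by auto
  moreover have "card (A \<inter> XM M) = i" "A \<in> F" using assms(3) unfolding D_i_def by auto
  ultimately show False
    using assms(1,4) unfolding uniform_family_def by auto
qed
lemma is_matching_exchange:
  assumes "is_matching F M" "B \<in> M" "A \<in> F" "A' \<in> F" "A \<inter> A' = {}"
    and "A \<inter> XM M \<subseteq> B" "A' \<inter> XM M \<subseteq> B"
  shows "is_matching F (insert A (insert A' (M - {B})))"
proof -
  have "C \<inter> D = {}" if "C \<in> M - {B}" "D \<inter> XM M \<subseteq> B" for C D
  proof -
    have "C \<inter> D \<subseteq> C \<inter> B" using that unfolding XM_def by auto
    moreover have "C \<inter> B = {}" using assms(1,2) that(1) unfolding is_matching_def by blast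
    ultimately show ?thesis by blast
  qed
  then show ?thesis
    using assms unfolding is_matching_def by (auto simp: Int_commute)
qed

lemma is_max_matching_no_exchange:
  assumes "is_max_matching F M" "finite M" "B \<in> M"
    and "A \<in> F - M" "A' \<in> F - M" "A \<noteq> A'" "A \<inter> A' = {}"
    and "A \<inter> XM M \<subseteq> B" "A' \<inter> XM M \<subseteq> B"
  shows False
proof -
  let ?M' = "insert A (insert A' (M - {B}))"
  have "is_matching F ?M'"
    using assms by (intro is_matching_exchange) (auto simp: is_max_matching_def)
  then have "card ?M' \<le> card M"
    using assms(1) unfolding is_max_matching_def by blast
  moreover have "card ?M' = card M + 1"
  proof -
    have "0 < card M" using assms(2,3) card_gt_0_iff by blast
    then show ?thesis using assms(2-6) by (simp add: card_Diff_singleton)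
  qed
  ultimately show False by simp
qed

lemma D_i_1_avoiding_member:
  assumes "uniform_family k F" "linear_family F"
    and "x \<in> XM M" "x \<noteq> y" "A' \<in> D_i 1 F M" "y \<in> A'" "y \<in> XM M"
    and "k \<le> d_i 1 F x M"
  shows "\<exists>A\<in>D_i 1 F M. x \<in> A \<and> A \<inter> A' = {}"
proof (rule ccontr)
  assume "\<not> ?thesis"
  then have meets: "A \<inter> A' \<noteq> {}" if "A \<in> D_i 1 F M" "x \<in> A" for A
    using that by blast
  let ?S = "{A \<in> D_i 1 F M. x \<in> A}"
  have A'_trace: "A' \<inter> XM M = {y}" using D_i_1_trace assms(5-7) .
  have A'_finite: "finite A'" and "card A' = k"
    using assms(1,5) unfolding uniform_family_def D_i_def by auto
  then have outside: "card (A' - XM M) = k - 1"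
    using card_Diff_subset_Int[of A' "XM M"] A'_trace by simp
  have hits: "A \<inter> (A' - XM M) \<noteq> {}" if "A \<in> ?S" for A
  proof -
    have "A \<inter> XM M = {x}" using D_i_1_trace[of A F M x] that assms(3) by blast
    then have "A \<inter> A' \<subseteq> A' - XM M" using A'_trace assms(4) by auto
    then show ?thesis using meets[of A] that by blast
  qed
  have star: "?S \<subseteq> F" "\<And>A. A \<in> ?S \<Longrightarrow> finite A \<and> x \<in> A"
    using assms(1) unfolding uniform_family_def D_i_def by auto
  have "card ?S \<le> card (A' - XM M)"
    using A'_finite assms(3)
    by (intro linear_family_star_meeting_card_le[OF assms(2) star _ _ hits]) auto
  moreover have "0 < k" using A'_finite assms(6) \<open>card A' = k\<close> card_gt_0_iff by blast
  ultimately show False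
    using assms(8) outside unfolding d_i_def by simp
qed

theorem lemma2:
  fixes F M :: "'a set set" and k :: nat and B :: "'a set" and x :: 'a
  assumes "k \<ge> 2"
    and "uniform_family k F"
    and "linear_family F"
    and "is_max_matching F M"
    and "B \<in> M"
    and "x \<in> B"
    and "d_i 1 F x M \<ge> k"
  shows "\<forall>y\<in>B. y \<noteq> x \<longrightarrow> d_i 1 F y M = 0"
proof (intro ballI impI, rule ccontr)
  fix y assume "y \<in> B" "y \<noteq> x" "d_i 1 F y M \<noteq> 0"
  then obtain A' where A': "A' \<in> D_i 1 F M" "y \<in> A'"
    unfolding d_i_def by (metis (no_types, lifting) card.empty empty_Collect_eq)
  have xy: "x \<in> XM M" "y \<in> XM M" using assms(5,6) \<open>y \<in> B\<close> unfolding XM_def by auto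
  obtain A where A: "A \<in> D_i 1 F M" "x \<in> A" "A \<inter> A' = {}"
    using D_i_1_avoiding_member[OF assms(2,3) xy(1) _ A' xy(2) assms(7)] \<open>y \<noteq> x\<close> by blast
  have matching: "is_matching F M" using assms(4) unfolding is_max_matching_def by blast
  have "finite M"
    using matching assms(2) finite_subset unfolding is_matching_def uniform_family_def by blast
  moreover have "A \<notin> M" "A' \<notin> M"
    using D_i_disjoint_matching[OF assms(2) matching] A(1) A'(1) assms(1) by auto
  moreover have "A \<inter> XM M \<subseteq> B" "A' \<inter> XM M \<subseteq> B"
    using D_i_1_trace[OF A(1,2) xy(1)] D_i_1_trace[OF A' xy(2)] assms(6) \<open>y \<in> B\<close> by auto
  moreover have "A \<noteq> A'" using A A'(2) by auto
  ultimately show False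
    using is_max_matching_no_exchange[OF assms(4) _ assms(5)] A(1,3) A'(1)
    unfolding D_i_def by blast
qed

end
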